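(* Let $g(n) = \frac{(\log n)^2}{n} f(n)$ and \[ M = \limsup_{t\to\infty} \max_{1 \le s \le t} \frac{\log(R(s,t))}{\sqrt{st}}. \] Then $\limsup_{n\to\infty} g(n) \le M^2$.
   Context: All logarithms are in base 2. For positive integers $s,t$, the Ramsey number $R(s,t)$ is the minimum $n$ such that every red/blue edge-coloring of the complete graph $K_n$ contains a red clique on $s$ vertices or a blue clique on $t$ vertices. For a graph $G$, $\chi(G)$ is its chromatic number and $\omega(G)$ its clique number. For $n \in \mathbb{N}$, $f(n)$ is the maximum of $\chi(G)/\omega(G)$ over all graphs $G$ on $n$ vertices. *)

theory Defs
  imports "HOL-Analysis.Analysis"
begin

text \<open>A simple graph (resp. a red/blue colouring of K_n) on vertex set {0..<n} is given by
  a predicate E on 2-element sets: the doubleton {u,v} (u \<noteq> v) is an edge (resp. red) iff E {u,v}.\<close>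

definition is_clique :: "(nat set \<Rightarrow> bool) \<Rightarrow> nat set \<Rightarrow> bool" where
  "is_clique E S \<longleftrightarrow> (\<forall>x\<in>S. \<forall>y\<in>S. x \<noteq> y \<longrightarrow> E {x, y})"

definition ramsey :: "nat \<Rightarrow> nat \<Rightarrow> nat" where
  "ramsey s t = (LEAST n. \<forall>E :: nat set \<Rightarrow> bool. \<exists>S. S \<subseteq> {0..<n} \<and>
      ((card S = s \<and> is_clique E S) \<or> (card S = t \<and> is_clique (\<lambda>e. \<not> E e) S)))"

definition clique_number :: "nat \<Rightarrow> (nat set \<Rightarrow> bool) \<Rightarrow> nat" where
  "clique_number n E = Max {card S | S. S \<subseteq> {0..<n} \<and> is_clique E S}"

definition chromatic_number :: "nat \<Rightarrow> (nat set \<Rightarrow> bool) \<Rightarrow> nat" where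
  "chromatic_number n E = (LEAST k. \<exists>c :: nat \<Rightarrow> nat. (\<forall>v<n. c v < k) \<and>
      (\<forall>u<n. \<forall>v<n. u \<noteq> v \<longrightarrow> E {u, v} \<longrightarrow> c u \<noteq> c v))"

definition f_ratio :: "nat \<Rightarrow> real" where
  "f_ratio n = Max {real (chromatic_number n E) / real (clique_number n E) | E. True}"

definition g_fun :: "nat \<Rightarrow> real" where
  "g_fun n = (log 2 (real n))\<^sup>2 / real n * f_ratio n"

definition M_const :: ereal where
  "M_const = limsup (\<lambda>t. ereal (Max ((\<lambda>s. log 2 (real (ramsey s t)) / sqrt (real s * real t)) ` {1..t})))"

end

theory Submission
  imports Defs "HOL-Real_Asymp.Real_Asymp"
begin

(*
  Colour a graph with clique number k greedily, removing an independent set of size t as long as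
  at least R(k+1, t) vertices remain: this gives chi <= n/t + R(k+1, t). Take t ~ D/k with
  D = (log n)^2 / b^2 for some b > M, so that n/(t k) <= b^2 n / (log n)^2. If k or t is bounded,
  the Erdos-Szekeres bound makes R(k+1, t) polylogarithmic in n; otherwise
  log R(k+1, t) <= a sqrt((k+1) t) ~ (a/b) log n for any a between M and b, so R(k+1, t) <= n^c
  with c < 1. Both error terms are o(n / (log n)^2).
*)

definition clique_or_anticlique :: "nat set \<Rightarrow> (nat set \<Rightarrow> bool) \<Rightarrow> nat \<Rightarrow> nat \<Rightarrow> bool" where
  "clique_or_anticlique V E s t \<longleftrightarrow>
     (\<exists>S\<subseteq>V. (card S = s \<and> is_clique E S) \<or> (card S = t \<and> is_clique (\<lambda>e. \<not> E e) S))"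

lemma ramsey_eq_Least:
  "ramsey s t = (LEAST n. \<forall>E. clique_or_anticlique {0..<n} E s t)"
  unfolding ramsey_def clique_or_anticlique_def ..

lemma clique_or_anticlique_swap:
  "clique_or_anticlique V (\<lambda>e. \<not> E e) t s \<longleftrightarrow> clique_or_anticlique V E s t"
  unfolding clique_or_anticlique_def by auto

lemma ramsey_commute: "ramsey s t = ramsey t s"
proof -
  have "(\<forall>E. clique_or_anticlique {0..<n} E s t) \<Longrightarrow> clique_or_anticlique {0..<n} E t s"
    for n E s t
    using clique_or_anticlique_swap[of "{0..<n}" E s t] by blast
  then have "(\<lambda>n. \<forall>E. clique_or_anticlique {0..<n} E s t) = (\<lambda>n. \<forall>E. clique_or_anticlique {0..<n} E t s)"
    by (intro ext iffI) blast+
  then show ?thesis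
    unfolding ramsey_eq_Least by simp
qed

lemma clique_or_anticlique_insert:
  assumes "clique_or_anticlique N E s t" "finite N" "v \<notin> N" "insert v N \<subseteq> V"
    and "\<And>u. u \<in> N \<Longrightarrow> E {v, u}"
  shows "clique_or_anticlique V E (Suc s) t"
proof -
  obtain S where S: "S \<subseteq> N" "(card S = s \<and> is_clique E S) \<or> (card S = t \<and> is_clique (\<lambda>e. \<not> E e) S)"
    using assms(1) unfolding clique_or_anticlique_def by blast
  show ?thesis
    using S(2)
  proof
    assume red: "card S = s \<and> is_clique E S"
    have "finite S" "v \<notin> S"
      using S(1) assms(2,3) finite_subset by auto
    then have "card (insert v S) = Suc s"
      using red by simp
    moreover have "is_clique E (insert v S)"
      using red S(1) assms(5) unfolding is_clique_def by (auto simp: insert_commute)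
    moreover have "insert v S \<subseteq> V"
      using S(1) assms(4) by blast
    ultimately show ?thesis
      unfolding clique_or_anticlique_def by blast
  next
    assume "card S = t \<and> is_clique (\<lambda>e. \<not> E e) S"
    moreover have "S \<subseteq> V"
      using S(1) assms(4) by blast
    ultimately show ?thesis
      unfolding clique_or_anticlique_def by blast
  qed
qed

lemma card_split_at_vertex:
  assumes "finite V" "v \<in> V" "A + B \<le> card V"
  shows "A \<le> card {u \<in> V - {v}. P u} \<or> B \<le> card {u \<in> V - {v}. \<not> P u}"
proof -
  have "{u \<in> V - {v}. P u} \<union> {u \<in> V - {v}. \<not> P u} = V - {v}"
    by blast
  then have "card {u \<in> V - {v}. P u} + card {u \<in> V - {v}. \<not> P u} = card V - 1"
    using card_Un_disjoint[of "{u \<in> V - {v}. P u}" "{u \<in> V - {v}. \<not> P u}"] assms(1,2)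
    by (simp add: card_Diff_singleton disjoint_iff)
  moreover have "0 < card V"
    using assms(1,2) card_gt_0_iff by blast
  ultimately show ?thesis
    using assms(3) by linarith
qed

lemma clique_or_anticlique_binomial:
  assumes "finite V" "(a + b) choose a \<le> card V"
  shows "clique_or_anticlique V E (Suc a) (Suc b)"
  using assms
proof (induction "a + b" arbitrary: a b V E rule: less_induct)
  case less
  have "V \<noteq> {}"
    using less.prems(2) zero_less_binomial_iff[of a "a + b"] by auto
  then obtain v where v: "v \<in> V"
    by blast
  consider "a = 0 \<or> b = 0" | a' b' where "a = Suc a'" "b = Suc b'"
    by (cases a; cases b) auto
  then show ?case
  proof cases
    case 1
    have "is_clique E {v}" "is_clique (\<lambda>e. \<not> E e) {v}"
      by (simp_all add: is_clique_def)
    then show ?thesis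
      using 1 v unfolding clique_or_anticlique_def by (intro exI[of _ "{v}"]) auto
  next
    case 2
    define N where "N = {u \<in> V - {v}. E {v, u}}"
    define N' where "N' = {u \<in> V - {v}. \<not> E {v, u}}"
    have fin: "finite N" "finite N'"
      using less.prems(1) by (auto simp: N_def N'_def)
    have "(a + b) choose a = ((a' + b) choose a') + ((b' + a) choose b')"
      using 2 binomial_symmetric[of a "a + b'"] by (simp add: add.commute)
    then have "((a' + b) choose a') \<le> card N \<or> ((b' + a) choose b') \<le> card N'"
      unfolding N_def N'_def using card_split_at_vertex[OF less.prems(1) v] less.prems(2) by simp
    then show ?thesis
    proof
      assume "(a' + b) choose a' \<le> card N"
      then have "clique_or_anticlique N E (Suc a') (Suc b)"
        using less.hyps[of a' b] 2 fin by simp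
      then show ?thesis
        using 2 fin v by (intro clique_or_anticlique_insert[where N = N]) (auto simp: N_def)
    next
      assume "(b' + a) choose b' \<le> card N'"
      then have "clique_or_anticlique N' (\<lambda>e. \<not> E e) (Suc b') (Suc a)"
        using less.hyps[of b' a] 2 fin by simp
      then have "clique_or_anticlique V (\<lambda>e. \<not> E e) (Suc b) (Suc a)"
        using 2 fin v by (intro clique_or_anticlique_insert[where N = N']) (auto simp: N'_def)
      then show ?thesis
        by (simp add: clique_or_anticlique_swap)
    qed
  qed
qed

lemma is_clique_image:
  assumes "is_clique (\<lambda>e. F (h ` e)) S" "inj_on h S"
  shows "is_clique F (h ` S)"
  using assms unfolding is_clique_def inj_on_def by auto

lemma clique_or_anticlique_card_le:
  assumes "\<forall>E. clique_or_anticlique {0..<m} E s t" "finite V" "m \<le> card V"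
  shows "clique_or_anticlique V E s t"
proof -
  obtain h where h: "bij_betw h {0..<card V} V"
    using ex_bij_betw_nat_finite[OF assms(2)] by blast
  obtain S where S: "S \<subseteq> {0..<m}"
    "(card S = s \<and> is_clique (\<lambda>e. E (h ` e)) S) \<or> (card S = t \<and> is_clique (\<lambda>e. \<not> E (h ` e)) S)"
    using assms(1)[rule_format, of "\<lambda>e. E (h ` e)"] unfolding clique_or_anticlique_def by blast
  have sub: "S \<subseteq> {0..<card V}"
    using S(1) assms(3) by auto
  have inj: "inj_on h S"
    using inj_on_subset[OF bij_betw_imp_inj_on[OF h] sub] .
  have "h ` S \<subseteq> V" "card (h ` S) = card S"
    using sub bij_betw_imp_surj_on[OF h] card_image[OF inj] by auto
  moreover have "is_clique E (h ` S)" if "is_clique (\<lambda>e. E (h ` e)) S"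
    using is_clique_image[OF that inj] .
  moreover have "is_clique (\<lambda>e. \<not> E e) (h ` S)" if "is_clique (\<lambda>e. \<not> E (h ` e)) S"
    using is_clique_image[OF that inj] .
  ultimately show ?thesis
    using S(2) unfolding clique_or_anticlique_def by blast
qed

lemma ramsey_le_binomial: "ramsey (Suc a) (Suc b) \<le> (a + b) choose a"
  unfolding ramsey_eq_Least using clique_or_anticlique_binomial by (intro Least_le) simp

lemma clique_or_anticlique_ramsey:
  assumes "0 < s" "0 < t" "finite V" "ramsey s t \<le> card V"
  shows "clique_or_anticlique V E s t"
proof -
  obtain a b where "s = Suc a" "t = Suc b"
    using assms(1,2) gr0_implies_Suc by metis
  then have "\<forall>E. clique_or_anticlique {0..<(a + b) choose a} E s t"
    using clique_or_anticlique_binomial by simp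
  then have "\<forall>E. clique_or_anticlique {0..<ramsey s t} E s t"
    unfolding ramsey_eq_Least by (rule LeastI)
  then show ?thesis
    using assms(3,4) by (rule clique_or_anticlique_card_le)
qed

lemma ramsey_le_power:
  assumes "min a b \<le> K"
  shows "ramsey (Suc a) (Suc b) \<le> (a + b + 1) ^ K"
proof -
  have "(a + b) choose a = (a + b) choose min a b"
    using binomial_symmetric[of a "a + b"] by (cases "a \<le> b") auto
  also have "\<dots> \<le> (a + b) ^ min a b"
    by (intro binomial_le_pow) simp
  also have "\<dots> \<le> (a + b + 1) ^ min a b"
    by (intro power_mono) simp_all
  also have "\<dots> \<le> (a + b + 1) ^ K"
    using assms by (intro power_increasing) simp_all
  finally show ?thesis
    using ramsey_le_binomial le_trans by blast
qed

lemma finite_clique_cards: "finite {card S | S. S \<subseteq> {0..<n} \<and> is_clique E S}"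
proof (rule finite_subset)
  show "{card S | S. S \<subseteq> {0..<n} \<and> is_clique E S} \<subseteq> {..card {0..<n}}"
    by (auto dest: card_mono[OF finite_atLeastLessThan])
qed simp

lemma card_le_clique_number:
  assumes "S \<subseteq> {0..<n}" "is_clique E S"
  shows "card S \<le> clique_number n E"
  unfolding clique_number_def using assms finite_clique_cards by (intro Max_ge) auto

lemma clique_number_le: "clique_number n E \<le> n"
proof -
  have "is_clique E {}"
    by (simp add: is_clique_def)
  then have "{card S | S. S \<subseteq> {0..<n} \<and> is_clique E S} \<noteq> {}"
    by blast
  then show ?thesis
    unfolding clique_number_def using finite_clique_cards
    by (intro Max.boundedI) (auto dest: card_mono[OF finite_atLeastLessThan])
qed

lemma clique_number_pos: "0 < n \<Longrightarrow> 0 < clique_number n E"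
  using card_le_clique_number[of "{0}" n E] by (simp add: is_clique_def)

definition is_colouring :: "nat set \<Rightarrow> (nat set \<Rightarrow> bool) \<Rightarrow> nat \<Rightarrow> (nat \<Rightarrow> nat) \<Rightarrow> bool" where
  "is_colouring V E q c \<longleftrightarrow> (\<forall>v\<in>V. c v < q) \<and> (\<forall>u\<in>V. \<forall>v\<in>V. u \<noteq> v \<longrightarrow> E {u, v} \<longrightarrow> c u \<noteq> c v)"

lemma chromatic_number_le:
  assumes "is_colouring {0..<n} E q c"
  shows "chromatic_number n E \<le> q"
  unfolding chromatic_number_def using assms
  by (intro Least_le exI[of _ c]) (simp add: is_colouring_def)

lemma chromatic_number_le_card: "chromatic_number n E \<le> n"
  by (rule chromatic_number_le[of n E n id]) (simp add: is_colouring_def)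

lemma ex_colouring_card:
  assumes "finite V" "card V \<le> q"
  shows "\<exists>c. is_colouring V E q c"
proof -
  obtain c where c: "bij_betw c V {0..<card V}"
    using ex_bij_betw_finite_nat[OF assms(1)] by blast
  have "c v < q" if "v \<in> V" for v
    using bij_betwE[OF c] that assms(2) by fastforce
  moreover have "c u \<noteq> c v" if "u \<in> V" "v \<in> V" "u \<noteq> v" for u v
    using inj_onD[OF bij_betw_imp_inj_on[OF c]] that by blast
  ultimately show ?thesis
    unfolding is_colouring_def by blast
qed

lemma is_colouring_Un_anticlique:
  assumes "is_colouring W E q c" "is_clique (\<lambda>e. \<not> E e) S"
  shows "is_colouring (W \<union> S) E (Suc q) (\<lambda>v. if v \<in> S then q else c v)"
  unfolding is_colouring_def
proof (intro conjI ballI impI)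
  fix v
  assume "v \<in> W \<union> S"
  then show "(if v \<in> S then q else c v) < Suc q"
    using assms(1) by (auto simp: is_colouring_def)
next
  fix u v
  assume uv: "u \<in> W \<union> S" "v \<in> W \<union> S" "u \<noteq> v" "E {u, v}"
  have "\<not> (u \<in> S \<and> v \<in> S)"
    using assms(2) uv(3,4) unfolding is_clique_def by blast
  then show "(if u \<in> S then q else c u) \<noteq> (if v \<in> S then q else c v)"
    using assms(1) uv unfolding is_colouring_def by auto
qed

lemma greedy_colouring:
  assumes "0 < t" "finite V"
    and "\<And>W. W \<subseteq> V \<Longrightarrow> m \<le> card W \<Longrightarrow> \<exists>S\<subseteq>W. card S = t \<and> is_clique (\<lambda>e. \<not> E e) S"
  shows "\<exists>c. is_colouring V E (card V div t + m) c"
  using assms(2,3)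
proof (induction "card V" arbitrary: V rule: less_induct)
  case less
  show ?case
  proof (cases "card V < m")
    case True
    then show ?thesis
      using ex_colouring_card[OF less.prems(1)] by simp
  next
    case False
    then obtain S where S: "S \<subseteq> V" "card S = t" "is_clique (\<lambda>e. \<not> E e) S"
      using less.prems(2)[of V] by auto
    have card_V: "card V = card (V - S) + t"
      using card_Diff_subset[OF finite_subset[OF S(1) less.prems(1)] S(1)]
        card_mono[OF less.prems(1) S(1)] S(2) by simp
    have "\<exists>c. is_colouring (V - S) E (card (V - S) div t + m) c"
    proof (rule less.hyps)
      show "card (V - S) < card V" "finite (V - S)"
        using card_V assms(1) less.prems(1) by simp_all
      show "\<And>W. W \<subseteq> V - S \<Longrightarrow> m \<le> card W \<Longrightarrow> \<exists>S\<subseteq>W. card S = t \<and> is_clique (\<lambda>e. \<not> E e) S"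
        using less.prems(2) by blast
    qed
    then obtain c where "is_colouring (V - S) E (card (V - S) div t + m) c"
      by blast
    then have "is_colouring (V - S \<union> S) E (Suc (card (V - S) div t + m)) (\<lambda>v. if v \<in> S then card (V - S) div t + m else c v)"
      using S(3) by (rule is_colouring_Un_anticlique)
    moreover have "V - S \<union> S = V"
      using S(1) by blast
    moreover have "Suc (card (V - S) div t + m) = card V div t + m"
      using card_V assms(1) by simp
    ultimately show ?thesis
      by metis
  qed
qed

lemma chromatic_number_le_ramsey:
  assumes "0 < t"
  shows "chromatic_number n E \<le> n div t + ramsey (Suc (clique_number n E)) t"
proof -
  let ?k = "clique_number n E"
  have anticlique: "\<exists>S\<subseteq>W. card S = t \<and> is_clique (\<lambda>e. \<not> E e) S"
    if W: "W \<subseteq> {0..<n}" "ramsey (Suc ?k) t \<le> card W" for W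
  proof -
    have "clique_or_anticlique W E (Suc ?k) t"
      using clique_or_anticlique_ramsey[of "Suc ?k" t W E] assms W finite_subset[OF W(1)] by simp
    moreover have "\<not> (card S = Suc ?k \<and> is_clique E S)" if "S \<subseteq> W" for S
    proof -
      have "S \<subseteq> {0..<n}"
        using that W(1) by blast
      then show ?thesis
        using card_le_clique_number[of S n E] by auto
    qed
    ultimately show ?thesis
      unfolding clique_or_anticlique_def by blast
  qed
  then obtain c where "is_colouring {0..<n} E (n div t + ramsey (Suc ?k) t) c"
    using greedy_colouring[of t "{0..<n}" "ramsey (Suc ?k) t" E, OF assms finite_atLeastLessThan anticlique]
    by auto
  then show ?thesis
    by (rule chromatic_number_le)
qed

lemma f_ratio_le:
  assumes "\<And>E. real (chromatic_number n E) / real (clique_number n E) \<le> B"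
  shows "f_ratio n \<le> B"
proof -
  let ?A = "{real (chromatic_number n E) / real (clique_number n E) | E. True}"
  have "?A \<subseteq> (\<lambda>(a, b). real a / real b) ` ({..n} \<times> {..n})"
  proof
    fix x
    assume "x \<in> ?A"
    then obtain E where "x = real (chromatic_number n E) / real (clique_number n E)"
      by blast
    moreover have "(chromatic_number n E, clique_number n E) \<in> {..n} \<times> {..n}"
      using chromatic_number_le_card clique_number_le by simp
    ultimately show "x \<in> (\<lambda>(a, b). real a / real b) ` ({..n} \<times> {..n})"
      by force
  qed
  then have "finite ?A"
    by (rule finite_subset) simp
  then show ?thesis
    unfolding f_ratio_def using assms by (subst Max_le_iff) auto
qed

(* The hypothesis on R(k+1, t) is only used for t = ceil(D/k), the size of the independent sets
   removed by the greedy colouring. *)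
lemma chromatic_div_clique_number_le:
  assumes "0 < n" "0 < D" "0 \<le> B"
    and ramsey_le: "\<And>k t. 0 < k \<Longrightarrow> real k < D \<Longrightarrow> D \<le> real k * real t \<Longrightarrow> real t < D / real k + 1 \<Longrightarrow>
                    real (ramsey (Suc k) t) \<le> B"
  shows "real (chromatic_number n E) / real (clique_number n E) \<le> real n / D + B"
proof -
  define k where "k = clique_number n E"
  have k: "0 < real k"
    unfolding k_def using clique_number_pos[OF assms(1)] by simp
  have "real (chromatic_number n E) / real k \<le> real n / D + B"
  proof (cases "D \<le> real k")
    case True
    have "real (chromatic_number n E) / real k \<le> real n / real k"
      using chromatic_number_le_card[of n E] k by (intro divide_right_mono) auto
    also have "\<dots> \<le> real n / D"
      using True assms(2) by (intro divide_left_mono) auto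
    finally show ?thesis
      using assms(3) by linarith
  next
    case False
    define t where "t = nat \<lceil>D / real k\<rceil>"
    have "real t = of_int \<lceil>D / real k\<rceil>"
      unfolding t_def using assms(2) k by simp
    then have t: "D / real k \<le> real t" "real t < D / real k + 1"
      using ceiling_correct[of "D / real k"] by linarith+
    have "0 < D / real k"
      using assms(2) k by simp
    then have t_pos: "0 < real t"
      using t(1) by linarith
    have D_le: "D \<le> real k * real t"
      using t(1) k by (simp add: field_simps)
    have "real (chromatic_number n E) \<le> real (n div t) + real (ramsey (Suc k) t)"
      using chromatic_number_le_ramsey[of t n E] t_pos unfolding k_def by linarith
    also have "\<dots> \<le> real n / real t + B"
    proof -
      have "real (n div t) \<le> real n / real t"
        by (rule of_nat_div_le_of_nat)
      then show ?thesis
        using ramsey_le[OF _ _ D_le t(2)] k False by simp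
    qed
    finally have "real (chromatic_number n E) / real k \<le> (real n / real t + B) / real k"
      using k by (intro divide_right_mono) auto
    also have "\<dots> = real n / (real k * real t) + B / real k"
      by (simp add: add_divide_distrib mult.commute)
    also have "\<dots> \<le> real n / D + B"
    proof -
      have "real n / (real k * real t) \<le> real n / D"
        using D_le assms(2) by (intro divide_left_mono) auto
      moreover have "B / real k \<le> B"
        using assms(3) k by (simp add: divide_le_eq mult_le_cancel_left1)
      ultimately show ?thesis
        by linarith
    qed
    finally show ?thesis .
  qed
  then show ?thesis
    unfolding k_def .
qed

lemma Suc_times_le_scale:
  fixes k t K :: nat
  assumes "0 < K" "K < k" "K < t" "real t < D / real k + 1"
  shows "real (Suc k) * real t \<le> (1 + 1 / real K)\<^sup>2 * D"
proof -
  have K: "0 < real K" "1 \<le> real k / real K"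
    using assms(1,2) by (simp_all add: field_simps)
  have k_le: "real (Suc k) \<le> (1 + 1 / real K) * real k"
    using K by (simp add: field_simps)
  have "real K < D / real k"
    using assms(3,4) by linarith
  then have "1 \<le> (D / real k) / real K"
    using le_divide_eq_1_pos[OF K(1), of "D / real k"] by linarith
  then have "real t \<le> D / real k + (D / real k) / real K"
    using assms(4) by linarith
  also have "\<dots> = (1 + 1 / real K) * (D / real k)"
    using K(1) assms(2) by (simp add: field_simps)
  finally have t_le: "real t \<le> (1 + 1 / real K) * (D / real k)" .
  have "real (Suc k) * real t \<le> ((1 + 1 / real K) * real k) * ((1 + 1 / real K) * (D / real k))"
    using k_le t_le by (intro mult_mono) auto
  also have "\<dots> = (1 + 1 / real K)\<^sup>2 * D"
    using assms(2) by (simp add: power2_eq_square)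
  finally show ?thesis .
qed

lemma le_powr_of_log_le:
  fixes x y b :: real
  assumes "1 < b" "0 \<le> x" "log b x \<le> y"
  shows "x \<le> b powr y"
  using assms log_le_iff[of b x y] by (cases "x = 0") auto

definition ramsey_growth_le :: "real \<Rightarrow> nat \<Rightarrow> bool" where
  "ramsey_growth_le a T0 \<longleftrightarrow>
     (\<forall>s t. T0 \<le> s \<longrightarrow> T0 \<le> t \<longrightarrow> log 2 (real (ramsey s t)) \<le> a * sqrt (real s * real t))"

lemma ramsey_le_scale:
  assumes "0 < a" "T0 \<le> K" "0 < K"
    and growth: "ramsey_growth_le a T0"
    and k: "0 < k" "real k < D" and t: "D \<le> real k * real t" "real t < D / real k + 1"
  shows "real (ramsey (Suc k) t) \<le> (D + real K + 2) ^ K + 2 powr (a * (1 + 1 / real K) * sqrt D)"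
proof (cases "k \<le> K \<or> t \<le> K")
  case True
  have "0 < t"
    using k t(1) by (cases t) auto
  then obtain t' where t': "t = Suc t'"
    using gr0_implies_Suc by blast
  have "ramsey (Suc k) t \<le> (k + t' + 1) ^ K"
    unfolding t' using True t' by (intro ramsey_le_power) auto
  then have "real (ramsey (Suc k) t) \<le> real (k + t' + 1) ^ K"
    by (metis of_nat_le_iff of_nat_power)
  moreover have "real (k + t' + 1) \<le> D + real K + 2"
  proof (cases "k \<le> K")
    case True
    have "D / real k \<le> D"
      using k by (simp add: divide_le_eq mult_le_cancel_left1)
    then show ?thesis
      using True t(2) t' by simp
  next
    case False
    then show ?thesis
      using \<open>k \<le> K \<or> t \<le> K\<close> k(2) t' by simp
  qed
  ultimately have "real (ramsey (Suc k) t) \<le> (D + real K + 2) ^ K"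
    by (meson order_trans power_mono of_nat_0_le_iff)
  moreover have "0 < 2 powr (a * (1 + 1 / real K) * sqrt D)"
    by simp
  ultimately show ?thesis
    by linarith
next
  case False
  have "T0 \<le> Suc k" "T0 \<le> t"
    using False assms(2) by auto
  then have "log 2 (real (ramsey (Suc k) t)) \<le> a * sqrt (real (Suc k) * real t)"
    using growth unfolding ramsey_growth_le_def by blast
  also have "\<dots> \<le> a * ((1 + 1 / real K) * sqrt D)"
  proof -
    have "sqrt (real (Suc k) * real t) \<le> sqrt ((1 + 1 / real K)\<^sup>2 * D)"
      using False assms(3) t(2) by (intro real_sqrt_le_mono Suc_times_le_scale) auto
    also have "\<dots> = (1 + 1 / real K) * sqrt D"
      by (simp add: real_sqrt_mult)
    finally show ?thesis
      using assms(1) by simp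
  qed
  finally have "real (ramsey (Suc k) t) \<le> 2 powr (a * (1 + 1 / real K) * sqrt D)"
    by (intro le_powr_of_log_le) (simp_all add: mult.assoc)
  moreover have "0 \<le> (D + real K + 2) ^ K"
    using k by simp
  ultimately show ?thesis
    by linarith
qed

lemma f_ratio_le_log:
  assumes "0 < a" "0 < b" "T0 \<le> K" "0 < K"
    and growth: "ramsey_growth_le a T0"
    and "2 \<le> n"
  shows "f_ratio n \<le> b\<^sup>2 * real n / (log 2 (real n))\<^sup>2
           + (((log 2 (real n))\<^sup>2 / b\<^sup>2 + real K + 2) ^ K + real n powr (a * (1 + 1 / real K) / b))"
proof -
  define l where "l = log 2 (real n)"
  define D where "D = l\<^sup>2 / b\<^sup>2"
  have l: "1 \<le> l"
    unfolding l_def using assms(6) by simp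
  then have D: "0 < D"
    unfolding D_def using assms(2) by simp
  define c where "c = a * (1 + 1 / real K) / b"
  have "2 powr (a * (1 + 1 / real K) * sqrt D) = (2 powr l) powr c"
    unfolding D_def c_def using l assms(2) by (simp add: real_sqrt_divide powr_powr mult.commute)
  then have powr_eq: "2 powr (a * (1 + 1 / real K) * sqrt D) = real n powr c"
    unfolding l_def using assms(6) by simp
  have "f_ratio n \<le> real n / D + ((D + real K + 2) ^ K + real n powr c)"
  proof (rule f_ratio_le, rule chromatic_div_clique_number_le)
    fix k t
    assume "0 < k" "real k < D" "D \<le> real k * real t" "real t < D / real k + 1"
    from ramsey_le_scale[OF assms(1,3,4) growth this]
    show "real (ramsey (Suc k) t) \<le> (D + real K + 2) ^ K + real n powr c"
      unfolding powr_eq .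
  qed (use assms(6) D in auto)
  then show ?thesis
    unfolding D_def l_def c_def by (simp add: mult.commute)
qed

lemma g_fun_le_log:
  assumes "0 < a" "0 < b" "T0 \<le> K" "0 < K"
    and growth: "ramsey_growth_le a T0"
    and "2 \<le> n"
  shows "g_fun n \<le> b\<^sup>2 + (log 2 (real n))\<^sup>2 / real n
           * (((log 2 (real n))\<^sup>2 / b\<^sup>2 + real K + 2) ^ K + real n powr (a * (1 + 1 / real K) / b))"
proof -
  define l where "l = log 2 (real n)"
  have "1 \<le> l"
    unfolding l_def using assms(6) by simp
  then have l: "0 < l\<^sup>2"
    by simp
  have "g_fun n \<le> b\<^sup>2 + l\<^sup>2 / real n * B" if "f_ratio n \<le> b\<^sup>2 * real n / l\<^sup>2 + B" for B
  proof -
    have "g_fun n = l\<^sup>2 / real n * f_ratio n"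
      unfolding g_fun_def l_def by simp
    also have "\<dots> \<le> l\<^sup>2 / real n * (b\<^sup>2 * real n / l\<^sup>2 + B)"
      using that by (intro mult_left_mono) auto
    also have "\<dots> = b\<^sup>2 + l\<^sup>2 / real n * B"
      using l assms(6) by (simp add: field_simps)
    finally show ?thesis .
  qed
  then show ?thesis
    using f_ratio_le_log[OF assms] unfolding l_def by blast
qed

lemma log_squared_div_tendsto_0:
  assumes "0 < b" "c < 1"
  shows "(\<lambda>n::nat. (log 2 (real n))\<^sup>2 / real n * (((log 2 (real n))\<^sup>2 / b\<^sup>2 + real K + 2) ^ K + real n powr c))
           \<longlonglongrightarrow> 0"
proof -
  have "(\<lambda>n::nat. (log 2 (real n))\<^sup>2 / real n * ((log 2 (real n))\<^sup>2 / b\<^sup>2 + real K + 2) ^ K) \<longlonglongrightarrow> 0"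
    using assms(1) by real_asymp
  moreover have "(\<lambda>n::nat. (log 2 (real n))\<^sup>2 / real n * real n powr c) \<longlonglongrightarrow> 0"
    using assms(2) by real_asymp
  ultimately show ?thesis
    unfolding distrib_left by (rule tendsto_add_zero)
qed

lemma limsup_g_fun_le:
  assumes "0 < a" "a < b"
    and growth: "ramsey_growth_le a T0"
  shows "limsup (\<lambda>n. ereal (g_fun n)) \<le> ereal (b\<^sup>2)"
proof -
  define K where "K = T0 + nat \<lceil>a / (b - a)\<rceil> + 1"
  have K: "T0 \<le> K" "0 < K"
    unfolding K_def by simp_all
  have "a / (b - a) < real K"
    unfolding K_def by linarith
  then have "a * (1 + 1 / real K) < b"
    using assms(2) K(2) by (simp add: field_simps)
  define c where "c = a * (1 + 1 / real K) / b"
  have "c < 1"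
    unfolding c_def using \<open>a * (1 + 1 / real K) < b\<close> assms(1,2) by simp
  define h where "h n = (log 2 (real n))\<^sup>2 / real n * (((log 2 (real n))\<^sup>2 / b\<^sup>2 + real K + 2) ^ K + real n powr c)"
    for n :: nat
  have "h \<longlonglongrightarrow> 0"
    unfolding h_def using assms(1,2) \<open>c < 1\<close> by (intro log_squared_div_tendsto_0) simp_all
  have "eventually (\<lambda>n. ereal (g_fun n) \<le> ereal (b\<^sup>2 + h n)) sequentially"
    using eventually_ge_at_top[of 2]
  proof eventually_elim
    case (elim n)
    show ?case
      using g_fun_le_log[OF assms(1) _ K growth elim] assms(1,2) unfolding h_def c_def by simp
  qed
  then have "limsup (\<lambda>n. ereal (g_fun n)) \<le> limsup (\<lambda>n. ereal (b\<^sup>2 + h n))"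
    by (rule Limsup_mono)
  also have "\<dots> = ereal (b\<^sup>2)"
    using \<open>h \<longlonglongrightarrow> 0\<close> by (intro lim_imp_Limsup) (auto intro!: tendsto_eq_intros)
  finally show ?thesis .
qed

(* m = 0 included, since log 2 0 = 0 *)
lemma log_nat_nonneg: "0 \<le> log 2 (real m)"
  by (cases "m = 0") (simp_all add: log_def)

lemma M_const_nonneg: "0 \<le> M_const"
  unfolding M_const_def
proof (rule le_Limsup)
  show "\<forall>\<^sub>F t in sequentially.
          0 \<le> ereal (Max ((\<lambda>s. log 2 (real (ramsey s t)) / sqrt (real s * real t)) ` {1..t}))"
  proof (rule eventually_sequentiallyI[of 1])
    fix t :: nat
    assume "1 \<le> t"
    then have "log 2 (real (ramsey 1 t)) / sqrt (real 1 * real t)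
               \<le> Max ((\<lambda>s. log 2 (real (ramsey s t)) / sqrt (real s * real t)) ` {1..t})"
      by (intro Max_ge) (auto intro!: image_eqI[where x = 1])
    moreover have "0 \<le> log 2 (real (ramsey 1 t)) / sqrt (real 1 * real t)"
      using log_nat_nonneg by simp
    ultimately show "0 \<le> ereal (Max ((\<lambda>s. log 2 (real (ramsey s t)) / sqrt (real s * real t)) ` {1..t}))"
      by simp
  qed
qed simp

lemma ex_ramsey_growth_le_of_M_const_less:
  assumes "M_const < ereal a"
  shows "\<exists>T0. ramsey_growth_le a T0"
proof -
  obtain T1 where T1: "\<And>t. T1 \<le> t \<Longrightarrow>
      Max ((\<lambda>s. log 2 (real (ramsey s t)) / sqrt (real s * real t)) ` {1..t}) < a"
    using Limsup_lessD[OF assms[unfolded M_const_def]] unfolding eventually_sequentially by auto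
  have ordered: "log 2 (real (ramsey s t)) \<le> a * sqrt (real s * real t)"
    if "max T1 1 \<le> t" "1 \<le> s" "s \<le> t" for s t
  proof -
    have "log 2 (real (ramsey s t)) / sqrt (real s * real t)
          \<le> Max ((\<lambda>s. log 2 (real (ramsey s t)) / sqrt (real s * real t)) ` {1..t})"
      using that by (intro Max_ge) auto
    then have "log 2 (real (ramsey s t)) / sqrt (real s * real t) < a"
      using T1[of t] that by simp
    moreover have "0 < sqrt (real s * real t)"
      using that by simp
    ultimately show ?thesis
      by (simp add: divide_less_eq less_imp_le)
  qed
  have "ramsey_growth_le a (max T1 1)"
    unfolding ramsey_growth_le_def
  proof (intro allI impI)
    fix s t
    assume "max T1 1 \<le> s" "max T1 1 \<le> t"
    then show "log 2 (real (ramsey s t)) \<le> a * sqrt (real s * real t)"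
      using ordered[of t s] ordered[of s t] ramsey_commute[of s t]
      by (cases "s \<le> t") (auto simp: mult.commute)
  qed
  then show ?thesis
    by blast
qed

theorem theorem2p2:
  shows "limsup (\<lambda>n. ereal (g_fun n)) \<le> M_const ^ 2"
proof (cases M_const)
  case (real L)
  have "0 \<le> L"
    using M_const_nonneg[unfolded real] by (simp only: ereal_less_eq)
  have "limsup (\<lambda>n. ereal (g_fun n)) \<le> ereal (L\<^sup>2)"
  proof (rule ereal_le_epsilon2)
    fix \<epsilon> :: real
    assume "0 < \<epsilon>"
    define b where "b = sqrt (L\<^sup>2 + \<epsilon>)"
    have "L < b"
      unfolding b_def using \<open>0 \<le> L\<close> \<open>0 < \<epsilon>\<close> real_less_rsqrt by simp
    then have "0 < (L + b) / 2" "(L + b) / 2 < b" "M_const < ereal ((L + b) / 2)"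
      unfolding real using \<open>0 \<le> L\<close> by simp_all
    then obtain T0 where "ramsey_growth_le ((L + b) / 2) T0"
      using ex_ramsey_growth_le_of_M_const_less by blast
    then have "limsup (\<lambda>n. ereal (g_fun n)) \<le> ereal (b\<^sup>2)"
      by (rule limsup_g_fun_le[OF \<open>0 < (L + b) / 2\<close> \<open>(L + b) / 2 < b\<close>])
    then show "limsup (\<lambda>n. ereal (g_fun n)) \<le> ereal (L\<^sup>2) + ereal \<epsilon>"
      unfolding b_def using \<open>0 < \<epsilon>\<close> by simp
  qed
  then show ?thesis
    unfolding real by (simp add: power2_eq_square)
qed (use M_const_nonneg in auto)

end
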